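(* Let $k\ge2$ be an integer, $\sigma>0$, $\beta_*(\lambda),\beta_n(\lambda)$ real numbers with $g(\lambda):=k\beta_*(\lambda)-\beta_n(\lambda)>0$, and set $\sigma_*(\lambda)=\frac{\sqrt{2g(\lambda)}}{k-1}$, $\sigma_\#(\lambda)=\frac{\sqrt{g(\lambda)}}{k-1}$. Let $$M_n(\omega,\lambda)=\int_{-\infty}^0e^{g(\lambda)s+\sigma(k-1)W_s(\omega)}ds .$$ Then: (i) $\mathbb E(M_n(\cdot,\lambda))$ exists iff $\sigma<\sigma_*$, in which case $\mathbb E(M_n(\cdot,\lambda))=\frac1{g(\lambda)-(k-1)^2\sigma^2/2}$. (ii) $\mathrm{Var}(M_n(\cdot,\lambda))$ exists iff $\sigma<\sigma_\#$, in which case $$\mathrm{Var}(M_n(\cdot,\lambda))=\frac{(k-1)^2\sigma^2}{2(g(\lambda)-(k-1)^2\sigma^2/2)^2(g(\lambda)-(k-1)^2\sigma^2)}.$$ (iii) The autocorrelation of $M_n(\theta_t\cdot,\lambda)$ exists iff $\sigma<\sigma_\#$, in which case for $0<\sigma<\sigma_\#$ and all $t\in\mathbb R$ $$R(t):=\frac{\mathrm{Cov}(M_n(\theta_{s+t}\cdot,\lambda),M_n(\theta_s\cdot,\lambda))}{\mathrm{Var}(M_n(\cdot,\lambda))}=\exp\Big(-\big(g(\lambda)-(k-1)^2\sigma^2/2\big)|t|\Big).$$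
   Context: $(\Omega,\mathcal F,\mathbb P)$ is the canonical two-sided Wiener space (continuous paths $\omega$ with $\omega(0)=0$, Wiener measure), restricted to a $\theta$-invariant full-measure subset on which $W_t(\omega)/t\to0$ as $t\to\pm\infty$; $W_t(\omega)=\omega(t)$ is a two-sided standard Brownian motion and $\theta_t\omega(\cdot)=\omega(\cdot+t)-\omega(t)$. $\mathrm{Cov}(X,Y)=\mathbb E(XY)-\mathbb E(X)\mathbb E(Y)$. *)

theory Defs
  imports "HOL-Probability.Probability"
begin

definition two_sided_BM :: "'a measure \<Rightarrow> (real \<Rightarrow> 'a \<Rightarrow> real) \<Rightarrow> bool" where
  "two_sided_BM M W \<longleftrightarrow>
     prob_space M \<and>
     (\<forall>t. W t \<in> borel_measurable M) \<and>
     (\<forall>\<omega>\<in>space M. W 0 \<omega> = 0 \<and> continuous_on UNIV (\<lambda>t. W t \<omega>)) \<and>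
     (\<forall>s t. s < t \<longrightarrow>
        distributed M lborel (\<lambda>\<omega>. W t \<omega> - W s \<omega>) (\<lambda>x. ennreal (normal_density 0 (sqrt (t - s)) x))) \<and>
     (\<forall>ts::real list. sorted_wrt (<) ts \<longrightarrow>
        prob_space.indep_vars M (\<lambda>_. borel) (\<lambda>i \<omega>. W (ts ! Suc i) \<omega> - W (ts ! i) \<omega>) {..<length ts - 1})"

text \<open>M_n(omega) = integral over (-infinity,0] of exp(g s + c W_s(omega)), with c = sigma (k-1).\<close>
definition Mn :: "(real \<Rightarrow> 'a \<Rightarrow> real) \<Rightarrow> real \<Rightarrow> real \<Rightarrow> 'a \<Rightarrow> real" where
  "Mn W g c \<omega> = (LINT s:{..0}|lborel. exp (g * s + c * W s \<omega>))"

definition Var :: "'a measure \<Rightarrow> ('a \<Rightarrow> real) \<Rightarrow> real" where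
  "Var M X = (\<integral>\<omega>. (X \<omega> - (\<integral>\<omega>. X \<omega> \<partial>M))\<^sup>2 \<partial>M)"

definition Cov :: "'a measure \<Rightarrow> ('a \<Rightarrow> real) \<Rightarrow> ('a \<Rightarrow> real) \<Rightarrow> real" where
  "Cov M X Y = (\<integral>\<omega>. X \<omega> * Y \<omega> \<partial>M) - (\<integral>\<omega>. X \<omega> \<partial>M) * (\<integral>\<omega>. Y \<omega> \<partial>M)"

end

theory Submission
  imports Defs
begin

(* Write c = sigma (k - 1) and a = g - c^2/2. By Tonelli the moments of M_n are Lebesgue
   integrals of exponential moments of Brownian increments, and these are Gaussian:
   E exp (c (W_s - W_0)) = exp (- c^2 s / 2) for s <= 0, whence E M_n = int_(-oo)^0 e^(a s) ds.
   In E (M_n o theta_(r+t) * M_n o theta_r) the two increments run over windows that overlap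
   in an interval of length L, and their joint exponential moment gains the factor exp (c^2 L).
   After substituting u = x + t for the first time variable, the range 0 < u <= t, where the
   windows are disjoint, contributes (1 - e^(-a t)) / a^2, and the range u <= 0 contributes
   e^(-a t) E M_n^2. Hence Cov = e^(-a |t|) Var, and E M_n^2 = 1 / (a (g - c^2)) is finite iff
   c^2 < g. Pathwise finiteness of M_n comes from W_s / s -> 0 as s -> -oo. *)

section \<open>Exponential integrals on the real line\<close>

lemma nn_integral_normal_density_exp:
  fixes \<sigma> \<alpha> :: real
  assumes "\<sigma> > 0"
  shows "(\<integral>\<^sup>+x. ennreal (normal_density 0 \<sigma> x) * ennreal (exp (\<alpha> * x)) \<partial>lborel)
           = ennreal (exp (\<alpha>\<^sup>2 * \<sigma>\<^sup>2 / 2))"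
proof -
  have tilt: "normal_density 0 \<sigma> x * exp (\<alpha> * x)
                = exp (\<alpha>\<^sup>2 * \<sigma>\<^sup>2 / 2) * normal_density (\<alpha> * \<sigma>\<^sup>2) \<sigma> x" for x
  proof -
    have "- ((x - 0)\<^sup>2 / (2 * \<sigma>\<^sup>2)) + \<alpha> * x = \<alpha>\<^sup>2 * \<sigma>\<^sup>2 / 2 + - ((x - \<alpha> * \<sigma>\<^sup>2)\<^sup>2 / (2 * \<sigma>\<^sup>2))"
      using assms by (simp add: field_simps power2_eq_square)
    then show ?thesis
      unfolding normal_density_def by (simp add: exp_add[symmetric] mult.commute mult.left_commute)
  qed
  have "(\<integral>\<^sup>+x. ennreal (normal_density 0 \<sigma> x) * ennreal (exp (\<alpha> * x)) \<partial>lborel)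
      = ennreal (exp (\<alpha>\<^sup>2 * \<sigma>\<^sup>2 / 2)) * (\<integral>\<^sup>+x. ennreal (normal_density (\<alpha> * \<sigma>\<^sup>2) \<sigma> x) \<partial>lborel)"
    by (subst nn_integral_cmult[symmetric])
       (auto intro!: nn_integral_cong simp: ennreal_mult'[symmetric] tilt)
  also have "(\<integral>\<^sup>+x. ennreal (normal_density (\<alpha> * \<sigma>\<^sup>2) \<sigma> x) \<partial>lborel) = 1"
    using prob_space.emeasure_space_1[OF prob_space_normal_density[of \<sigma> "\<alpha> * \<sigma>\<^sup>2"]] assms
    by (simp add: emeasure_density)
  finally show ?thesis by simp
qed

lemma nn_integral_exp_atMost:
  fixes p z :: real
  assumes p: "p > 0"
  shows "(\<integral>\<^sup>+x. ennreal (exp (p * x)) * indicator {..z} x \<partial>lborel) = ennreal (exp (p * z) / p)"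
proof -
  have "(\<integral>\<^sup>+x. ennreal (exp (p * x)) * indicator {..z} x \<partial>lborel)
      = (\<integral>\<^sup>+x. ennreal (exp (- p * x)) * indicator {-z..} x \<partial>lborel)"
    by (subst nn_integral_real_affine[where c = "-1" and t = 0])
       (auto intro!: nn_integral_cong split: split_indicator)
  also have "\<dots> = 0 - (- exp (- p * (- z)) / p)"
  proof (rule nn_integral_FTC_atLeast)
    show "DERIV (\<lambda>x. - exp (- p * x) / p) x :> exp (- p * x)" for x
      using p by (auto intro!: derivative_eq_intros)
    show "((\<lambda>x. - exp (- p * x) / p) \<longlongrightarrow> 0) at_top"
      using p by real_asymp
  qed auto
  finally show ?thesis by simp
qed

lemma nn_integral_exp_lessThan:
  fixes p z :: real
  assumes "p > 0"
  shows "(\<integral>\<^sup>+x. ennreal (exp (p * x)) * indicator {..<z} x \<partial>lborel) = ennreal (exp (p * z) / p)"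
proof -
  have "AE x in lborel. x \<noteq> z" by (rule AE_lborel_singleton)
  then have "(\<integral>\<^sup>+x. ennreal (exp (p * x)) * indicator {..<z} x \<partial>lborel)
           = (\<integral>\<^sup>+x. ennreal (exp (p * x)) * indicator {..z} x \<partial>lborel)"
    by (intro nn_integral_cong_AE) (auto elim!: eventually_mono split: split_indicator)
  with nn_integral_exp_atMost[OF assms] show ?thesis by simp
qed

lemma nn_integral_exp_greaterThanAtMost:
  fixes p t :: real
  assumes "p > 0" "t \<ge> 0"
  shows "(\<integral>\<^sup>+x. ennreal (exp (p * x)) * indicator {0<..t} x \<partial>lborel) = ennreal ((exp (p * t) - 1) / p)"
proof -
  have "AE x in lborel. x \<noteq> 0" by (rule AE_lborel_singleton)
  then have "(\<integral>\<^sup>+x. ennreal (exp (p * x)) * indicator {0<..t} x \<partial>lborel)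
           = (\<integral>\<^sup>+x. ennreal (exp (p * x)) * indicator {0..t} x \<partial>lborel)"
    by (intro nn_integral_cong_AE) (auto elim!: eventually_mono split: split_indicator)
  also have "\<dots> = ennreal (exp (p * t) / p - exp (p * 0) / p)"
    by (rule nn_integral_FTC_Icc) (use assms in \<open>auto intro!: derivative_eq_intros\<close>)
  finally show ?thesis by (simp add: diff_divide_distrib)
qed

lemma emeasure_lborel_atMost: "emeasure lborel {..z::real} = \<infinity>"
proof (rule ccontr)
  assume "emeasure lborel {..z} \<noteq> \<infinity>"
  then obtain n where n: "emeasure lborel {..z} < of_nat n"
    using ennreal_Ex_less_of_nat by (auto simp: less_top)
  have "emeasure lborel {z - real n..z} \<le> emeasure lborel {..z}"
    by (rule emeasure_mono) auto
  with n show False by (simp add: ennreal_of_nat_eq_real_of_nat)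
qed

lemma nn_integral_exp_atMost_eq_infinity:
  fixes p z :: real
  assumes "p \<le> 0"
  shows "(\<integral>\<^sup>+x. ennreal (exp (p * x)) * indicator {..z} x \<partial>lborel) = \<infinity>"
proof -
  have "ennreal (exp (p * z)) * emeasure lborel {..z}
      \<le> (\<integral>\<^sup>+x. ennreal (exp (p * x)) * indicator {..z} x \<partial>lborel)"
    using assms
    by (subst nn_integral_cmult_indicator[symmetric])
       (auto intro!: nn_integral_mono mult_left_mono_neg split: split_indicator)
  then show ?thesis by (simp add: emeasure_lborel_atMost ennreal_mult_top top_unique)
qed

lemma nn_integral_exp_iterated:
  fixes a b :: real and A :: "real \<Rightarrow> real set"
  assumes a: "a > 0" and [measurable]: "\<And>x. A x \<in> sets borel"
    and A: "\<And>x. (\<integral>\<^sup>+y\<in>A x. ennreal (exp (a * y)) \<partial>lborel) = ennreal (exp (a * x) / a)"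
  shows "(\<integral>\<^sup>+x. (\<integral>\<^sup>+y. ennreal (exp (b * x)) * indicator {..0} x * (ennreal (exp (a * y)) * indicator (A x) y) \<partial>lborel) \<partial>lborel)
       = ennreal (1 / a) * (\<integral>\<^sup>+x\<in>{..0}. ennreal (exp ((a + b) * x)) \<partial>lborel)"
proof -
  have "(\<integral>\<^sup>+y. ennreal (exp (b * x)) * indicator {..0} x * (ennreal (exp (a * y)) * indicator (A x) y) \<partial>lborel)
      = ennreal (1 / a) * (ennreal (exp ((a + b) * x)) * indicator {..0} x)" for x
  proof -
    have "exp (b * x) * (exp (a * x) / a) = 1 / a * exp ((a + b) * x)"
      by (simp add: mult_exp_exp algebra_simps)
    then show ?thesis
      using a by (subst nn_integral_cmult) (auto simp: A ennreal_mult'[symmetric] split: split_indicator)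
  qed
  then show ?thesis by (simp add: nn_integral_cmult)
qed

lemma continuous_sublinear_at_bot_bound:
  fixes f :: "real \<Rightarrow> real"
  assumes cont: "continuous_on UNIV f" and lim: "((\<lambda>t. f t / t) \<longlongrightarrow> 0) at_bot" and "\<epsilon> > 0"
  obtains B where "\<And>x. x \<le> z \<Longrightarrow> f x \<le> B - \<epsilon> * x"
proof -
  obtain T where T: "\<And>t. t \<le> T \<Longrightarrow> \<bar>f t / t\<bar> < \<epsilon>"
    using tendstoD[OF lim \<open>\<epsilon> > 0\<close>] by (auto simp: eventually_at_bot_linorder)
  define T' where "T' = min T (-1)"
  obtain C where C: "\<And>x. x \<in> {T'..z} \<Longrightarrow> \<bar>f x\<bar> \<le> C"
    using compact_imp_bounded[OF compact_continuous_image[OF continuous_on_subset[OF cont] compact_Icc]]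
    unfolding bounded_iff by (metis image_eqI real_norm_def subset_UNIV)
  have "f x \<le> max 0 (C + \<epsilon> * z) - \<epsilon> * x" if "x \<le> z" for x
  proof (cases "x \<le> T'")
    case True
    then have "\<bar>f x\<bar> / \<bar>x\<bar> < \<epsilon>" "\<bar>x\<bar> = - x" "\<bar>x\<bar> > 0"
      using T[of x] by (auto simp: T'_def)
    then have "\<bar>f x\<bar> < \<epsilon> * - x"
      by (metis pos_divide_less_eq)
    then show ?thesis by linarith
  next
    case False
    then have "f x \<le> C" using C[of x] that by simp
    moreover have "\<epsilon> * x \<le> \<epsilon> * z" using that \<open>\<epsilon> > 0\<close> by simp
    ultimately show ?thesis by linarith
  qed
  then show ?thesis by (rule that)
qed

lemma borel_measurable_continuous_process:
  fixes X :: "real \<Rightarrow> 'a \<Rightarrow> real"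
  assumes meas: "\<And>t. X t \<in> borel_measurable M"
    and cont: "\<And>\<omega>. \<omega> \<in> space M \<Longrightarrow> continuous_on UNIV (\<lambda>t. X t \<omega>)"
  shows "(\<lambda>p. X (fst p) (snd p)) \<in> borel_measurable (lborel \<Otimes>\<^sub>M M)"
proof (rule borel_measurable_LIMSEQ_real)
  define dyadic :: "nat \<Rightarrow> real \<Rightarrow> real" where "dyadic n t = \<lfloor>t * 2^n\<rfloor> / 2^n" for n t
  show "(\<lambda>p. X (dyadic n (fst p)) (snd p)) \<in> borel_measurable (lborel \<Otimes>\<^sub>M M)" for n
    unfolding dyadic_def using meas
    by (intro measurable_compose_countable'[where I = UNIV and g = "\<lambda>p. \<lfloor>fst p * 2^n\<rfloor>"
          and f = "\<lambda>i p. X (real_of_int i / 2^n) (snd p)"]) auto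
  fix p :: "real \<times> 'a"
  assume "p \<in> space (lborel \<Otimes>\<^sub>M M)"
  then have "isCont (\<lambda>t. X t (snd p)) (fst p)"
    using cont[of "snd p"] by (auto simp: space_pair_measure continuous_on_eq_continuous_at)
  moreover have "(\<lambda>n. dyadic n (fst p)) \<longlonglongrightarrow> fst p"
  proof (rule tendsto_sandwich[of "\<lambda>n. fst p - (1/2)^n" _ _ "\<lambda>n. fst p"])
    have "(fst p * 2^n - 1) / 2^n \<le> dyadic n (fst p)" "dyadic n (fst p) \<le> fst p * 2^n / 2^n" for n
      unfolding dyadic_def by (intro divide_right_mono, linarith, simp)+
    then have "fst p - (1/2)^n \<le> dyadic n (fst p) \<and> dyadic n (fst p) \<le> fst p" for n
      by (simp add: diff_divide_distrib power_one_over)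
    then show "eventually (\<lambda>n. fst p - (1/2)^n \<le> dyadic n (fst p)) sequentially"
      "eventually (\<lambda>n. dyadic n (fst p) \<le> fst p) sequentially"
      by auto
    show "(\<lambda>n. fst p - (1/2::real)^n) \<longlonglongrightarrow> fst p"
      by (auto intro!: tendsto_eq_intros LIMSEQ_realpow_zero)
  qed simp
  ultimately show "(\<lambda>n. X (dyadic n (fst p)) (snd p)) \<longlonglongrightarrow> X (fst p) (snd p)"
    by (rule isCont_tendsto_compose)
qed

section \<open>The cross-moment kernel\<close>

definition overlap :: "real \<Rightarrow> real \<Rightarrow> real \<Rightarrow> real \<Rightarrow> real" where
  "overlap l1 r1 l2 r2 = max 0 (min r1 r2 - max l1 l2)"

lemma borel_measurable_overlap[measurable (raw)]:
  assumes [measurable]: "f1 \<in> borel_measurable M" "f2 \<in> borel_measurable M"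
    "f3 \<in> borel_measurable M" "f4 \<in> borel_measurable M"
  shows "(\<lambda>x. overlap (f1 x) (f2 x) (f3 x) (f4 x)) \<in> borel_measurable M"
  unfolding overlap_def by measurable

text \<open>The windows \<open>[x + t, t]\<close> and \<open>[y, 0]\<close> are those of the increments entering
  \<open>M\<^sub>n \<circ> \<theta>\<^sub>r\<^sub>+\<^sub>t\<close> and \<open>M\<^sub>n \<circ> \<theta>\<^sub>r\<close>, translated by \<open>-r\<close>.\<close>

definition cross_moment :: "real \<Rightarrow> real \<Rightarrow> real \<Rightarrow> ennreal" where
  "cross_moment a c t =
     (\<integral>\<^sup>+x\<in>{..0}. (\<integral>\<^sup>+y\<in>{..0}. ennreal (exp (a * x + a * y + c\<^sup>2 * overlap (x + t) t y 0)) \<partial>lborel) \<partial>lborel)"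

lemma cross_moment_factor:
  assumes "t \<ge> 0"
  shows "cross_moment a c t = (\<integral>\<^sup>+x\<in>{..0}. ennreal (exp (a * x)) *
           (\<integral>\<^sup>+y\<in>{..0}. ennreal (exp (a * y + c\<^sup>2 * overlap (x + t) 0 y 0)) \<partial>lborel) \<partial>lborel)"
  unfolding cross_moment_def
proof (intro nn_integral_cong arg_cong2[where f = "(*)"] refl)
  fix x :: real
  have "overlap (x + t) t y 0 = overlap (x + t) 0 y 0" for y
    using assms by (simp add: overlap_def)
  then show "(\<integral>\<^sup>+y\<in>{..0}. ennreal (exp (a * x + a * y + c\<^sup>2 * overlap (x + t) t y 0)) \<partial>lborel)
      = ennreal (exp (a * x)) * (\<integral>\<^sup>+y\<in>{..0}. ennreal (exp (a * y + c\<^sup>2 * overlap (x + t) 0 y 0)) \<partial>lborel)"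
    by (subst nn_integral_cmult[symmetric])
       (auto intro!: nn_integral_cong simp: exp_add ennreal_mult' mult.assoc)
qed

lemma exp_overlap_split_diagonal:
  fixes a c x y :: real
  shows "ennreal (exp (a * x + a * y + c\<^sup>2 * overlap x 0 y 0)) * indicator {..0} y * indicator {..0} x
       = ennreal (exp ((a - c\<^sup>2) * x)) * indicator {..0} x * (ennreal (exp (a * y)) * indicator {..x} y)
         + ennreal (exp ((a - c\<^sup>2) * y)) * indicator {..0} y * (ennreal (exp (a * x)) * indicator {..<y} x)"
proof -
  have "overlap x 0 y 0 = - max x y" if "x \<le> 0" "y \<le> 0"
    using that by (simp add: overlap_def)
  moreover have "exp (a * x + a * y - c\<^sup>2 * x) = exp ((a - c\<^sup>2) * x) * exp (a * y)"
    "exp (a * x + a * y - c\<^sup>2 * y) = exp ((a - c\<^sup>2) * y) * exp (a * x)"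
    by (simp_all add: mult_exp_exp algebra_simps)
  ultimately show ?thesis
    by (cases "y \<le> x") (auto simp: max_def ennreal_mult' split: split_indicator)
qed

lemma cross_moment_shift:
  assumes a: "a > 0" and t: "t \<ge> 0"
  shows "cross_moment a c t = ennreal ((1 - exp (- a * t)) / a\<^sup>2) + ennreal (exp (- a * t)) * cross_moment a c 0"
proof -
  define K where "K u = (\<integral>\<^sup>+y\<in>{..0}. ennreal (exp (a * y + c\<^sup>2 * overlap u 0 y 0)) \<partial>lborel)" for u
  have K_meas[measurable]: "K \<in> borel_measurable borel"
    unfolding K_def by measurable
  have K_no_overlap: "K u = ennreal (1 / a)" if "u \<ge> 0" for u
  proof -
    have "overlap u 0 y 0 = 0" for y using that by (simp add: overlap_def)
    then show ?thesis using nn_integral_exp_atMost[OF a, of 0] by (simp add: K_def)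
  qed
  have factor: "cross_moment a c s = (\<integral>\<^sup>+x\<in>{..0}. ennreal (exp (a * x)) * K (x + s) \<partial>lborel)"
    if "s \<ge> 0" for s
    using cross_moment_factor[OF that] by (simp add: K_def)
  have "cross_moment a c t = (\<integral>\<^sup>+u. ennreal (exp (a * (u - t))) * K u * indicator {..t} u \<partial>lborel)"
    unfolding factor[OF t]
    by (subst nn_integral_real_affine[where c = 1 and t = t])
       (auto intro!: nn_integral_cong simp: add.commute split: split_indicator)
  also have "\<dots> = ennreal (exp (- a * t)) *
      ((\<integral>\<^sup>+u\<in>{..0}. ennreal (exp (a * u)) * K u \<partial>lborel) + (\<integral>\<^sup>+u\<in>{0<..t}. ennreal (exp (a * u)) * K u \<partial>lborel))"
  proof -
    have "ennreal (exp (a * (u - t))) * K u * indicator {..t} u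
        = ennreal (exp (- a * t)) * (ennreal (exp (a * u)) * K u * indicator {..0} u
                                     + ennreal (exp (a * u)) * K u * indicator {0<..t} u)" for u
      using t by (auto simp: exp_add[symmetric] ennreal_mult'[symmetric] algebra_simps split: split_indicator)
    then show ?thesis
      by (simp add: nn_integral_cmult nn_integral_add)
  qed
  also have "(\<integral>\<^sup>+u\<in>{0<..t}. ennreal (exp (a * u)) * K u \<partial>lborel)
      = ennreal (1 / a) * (\<integral>\<^sup>+u\<in>{0<..t}. ennreal (exp (a * u)) \<partial>lborel)"
    by (subst nn_integral_cmult[symmetric])
       (auto intro!: nn_integral_cong simp: K_no_overlap mult_ac split: split_indicator)
  also have "\<dots> = ennreal ((exp (a * t) - 1) / a\<^sup>2)"
    using a t by (simp add: nn_integral_exp_greaterThanAtMost ennreal_mult'[symmetric] power2_eq_square)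
  also have "(\<integral>\<^sup>+u\<in>{..0}. ennreal (exp (a * u)) * K u \<partial>lborel) = cross_moment a c 0"
    using factor[of 0] by simp
  finally show ?thesis
    using a t by (simp add: distrib_left ennreal_mult'[symmetric] exp_minus field_simps)
qed

lemma cross_moment_zero:
  assumes a: "a > 0"
  shows "cross_moment a c 0 = ennreal (2 / a) * (\<integral>\<^sup>+x\<in>{..0}. ennreal (exp ((2 * a - c\<^sup>2) * x)) \<partial>lborel)"
proof -
  \<comment> \<open>Split along the diagonal; Fubini turns the half \<open>x < y\<close> into a copy of the half \<open>y \<le> x\<close>.\<close>
  define D where "D x y = ennreal (exp ((a - c\<^sup>2) * x)) * indicator {..0} x * (ennreal (exp (a * y)) * indicator {..x} y)"
    for x y :: real
  define D' where "D' x y = ennreal (exp ((a - c\<^sup>2) * y)) * indicator {..0} y * (ennreal (exp (a * x)) * indicator {..<y} x)"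
    for x y :: real
  have [measurable]: "Measurable.pred (borel \<Otimes>\<^sub>M borel) (\<lambda>p::real \<times> real. fst p \<in> {..<snd p})"
    unfolding lessThan_iff by measurable
  have [measurable]: "Measurable.pred (borel \<Otimes>\<^sub>M borel) (\<lambda>p::real \<times> real. snd p \<in> {..fst p})"
    unfolding atMost_iff by measurable
  have D_meas: "case_prod D \<in> borel_measurable (lborel \<Otimes>\<^sub>M lborel)"
    unfolding D_def by measurable
  have D'_meas: "case_prod D' \<in> borel_measurable (lborel \<Otimes>\<^sub>M lborel)"
    unfolding D'_def by measurable
  have "cross_moment a c 0 = (\<integral>\<^sup>+x. (\<integral>\<^sup>+y. D x y + D' x y \<partial>lborel) \<partial>lborel)"
    unfolding cross_moment_def D_def D'_def exp_overlap_split_diagonal[symmetric]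
    by (simp add: nn_integral_multc)
  also have "\<dots> = (\<integral>\<^sup>+x. (\<integral>\<^sup>+y. D x y \<partial>lborel) + (\<integral>\<^sup>+y. D' x y \<partial>lborel) \<partial>lborel)"
    using measurable_Pair2[OF D'_meas]
    by (intro nn_integral_cong nn_integral_add) (simp_all add: D_def)
  also have "\<dots> = (\<integral>\<^sup>+x. (\<integral>\<^sup>+y. D x y \<partial>lborel) \<partial>lborel) + (\<integral>\<^sup>+x. (\<integral>\<^sup>+y. D' x y \<partial>lborel) \<partial>lborel)"
    using D_meas D'_meas by (intro nn_integral_add) (auto intro: lborel.borel_measurable_nn_integral)
  also have "(\<integral>\<^sup>+x. (\<integral>\<^sup>+y. D' x y \<partial>lborel) \<partial>lborel) = (\<integral>\<^sup>+y. (\<integral>\<^sup>+x. D' x y \<partial>lborel) \<partial>lborel)"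
    by (rule lborel_pair.Fubini'[OF D'_meas, symmetric])
  also have "(\<integral>\<^sup>+x. (\<integral>\<^sup>+y. D x y \<partial>lborel) \<partial>lborel)
      = ennreal (1 / a) * (\<integral>\<^sup>+x\<in>{..0}. ennreal (exp ((a + (a - c\<^sup>2)) * x)) \<partial>lborel)"
    unfolding D_def using a by (rule nn_integral_exp_iterated) (simp_all add: nn_integral_exp_atMost[OF a])
  also have "(\<integral>\<^sup>+y. (\<integral>\<^sup>+x. D' x y \<partial>lborel) \<partial>lborel)
      = ennreal (1 / a) * (\<integral>\<^sup>+x\<in>{..0}. ennreal (exp ((a + (a - c\<^sup>2)) * x)) \<partial>lborel)"
    unfolding D'_def using a by (rule nn_integral_exp_iterated) (simp_all add: nn_integral_exp_lessThan[OF a])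
  also have "a + (a - c\<^sup>2) = 2 * a - c\<^sup>2"
    by linarith
  finally show ?thesis
    using a by (simp add: distrib_right[symmetric] ennreal_plus[symmetric])
qed

section \<open>Exponential moments of Brownian increments\<close>

locale two_sided_brownian_motion =
  fixes M :: "'a measure" and W :: "real \<Rightarrow> 'a \<Rightarrow> real"
  assumes BM: "two_sided_BM M W"
begin

sublocale prob_space M
  using BM by (simp add: two_sided_BM_def)

lemma borel_measurable_W [measurable]: "W t \<in> borel_measurable M"
  using BM by (simp add: two_sided_BM_def)

lemma W_0: "\<omega> \<in> space M \<Longrightarrow> W 0 \<omega> = 0"
  using BM by (simp add: two_sided_BM_def)

lemma continuous_on_W: "\<omega> \<in> space M \<Longrightarrow> continuous_on UNIV (\<lambda>t. W t \<omega>)"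
  using BM by (simp add: two_sided_BM_def)

lemma borel_measurable_W_at [measurable (raw)]:
  assumes "f \<in> borel_measurable N" "h \<in> measurable N M"
  shows "(\<lambda>z. W (f z) (h z)) \<in> borel_measurable N"
proof -
  have pair: "(\<lambda>z. (f z, h z)) \<in> measurable N (lborel \<Otimes>\<^sub>M M)"
    using assms by (intro measurable_Pair) auto
  have "(\<lambda>p. W (fst p) (snd p)) \<in> borel_measurable (lborel \<Otimes>\<^sub>M M)"
    by (rule borel_measurable_continuous_process) (simp_all add: continuous_on_W)
  from measurable_compose[OF pair this] show ?thesis
    by simp
qed

lemma nn_integral_exp_increment:
  assumes "p \<le> q"
  shows "(\<integral>\<^sup>+\<omega>. ennreal (exp (\<alpha> * (W q \<omega> - W p \<omega>))) \<partial>M) = ennreal (exp (\<alpha>\<^sup>2 * (q - p) / 2))"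
proof (cases "p = q")
  case False
  with assms have "p < q" by simp
  then have "distributed M lborel (\<lambda>\<omega>. W q \<omega> - W p \<omega>) (\<lambda>x. ennreal (normal_density 0 (sqrt (q - p)) x))"
    using BM by (simp add: two_sided_BM_def)
  then have "(\<integral>\<^sup>+\<omega>. ennreal (exp (\<alpha> * (W q \<omega> - W p \<omega>))) \<partial>M)
      = (\<integral>\<^sup>+x. ennreal (normal_density 0 (sqrt (q - p)) x) * ennreal (exp (\<alpha> * x)) \<partial>lborel)"
    by (rule distributed_nn_integral[symmetric]) simp
  also have "\<dots> = ennreal (exp (\<alpha>\<^sup>2 * (sqrt (q - p))\<^sup>2 / 2))"
    using \<open>p < q\<close> by (intro nn_integral_normal_density_exp) simp
  finally show ?thesis using \<open>p < q\<close> by simp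
qed (simp add: emeasure_space_1)

lemma nn_integral_exp_increments:
  assumes ts: "sorted_wrt (<) ts"
  shows "(\<integral>\<^sup>+\<omega>. (\<Prod>i<length ts - 1. ennreal (exp (\<alpha> i * (W (ts ! Suc i) \<omega> - W (ts ! i) \<omega>)))) \<partial>M)
       = (\<Prod>i<length ts - 1. ennreal (exp ((\<alpha> i)\<^sup>2 * (ts ! Suc i - ts ! i) / 2)))"
proof -
  have "indep_vars (\<lambda>_. borel) (\<lambda>i \<omega>. W (ts ! Suc i) \<omega> - W (ts ! i) \<omega>) {..<length ts - 1}"
    using BM ts by (simp add: two_sided_BM_def)
  then have "indep_vars (\<lambda>_. borel) (\<lambda>i \<omega>. ennreal (exp (\<alpha> i * (W (ts ! Suc i) \<omega> - W (ts ! i) \<omega>))))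
      {..<length ts - 1}"
    by (rule indep_vars_compose2[where Y = "\<lambda>i x. ennreal (exp (\<alpha> i * x))"]) simp
  then have "(\<integral>\<^sup>+\<omega>. (\<Prod>i<length ts - 1. ennreal (exp (\<alpha> i * (W (ts ! Suc i) \<omega> - W (ts ! i) \<omega>)))) \<partial>M)
      = (\<Prod>i<length ts - 1. \<integral>\<^sup>+\<omega>. ennreal (exp (\<alpha> i * (W (ts ! Suc i) \<omega> - W (ts ! i) \<omega>))) \<partial>M)"
    by (rule indep_vars_nn_integral[rotated]) auto
  also have "\<dots> = (\<Prod>i<length ts - 1. ennreal (exp ((\<alpha> i)\<^sup>2 * (ts ! Suc i - ts ! i) / 2)))"
    using sorted_wrt_nth_less[OF ts]
    by (intro prod.cong refl nn_integral_exp_increment) (simp add: less_imp_le)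
  finally show ?thesis .
qed

lemma nn_integral_exp_two_increments:
  assumes "p0 \<le> p1" "p1 \<le> p2"
  shows "(\<integral>\<^sup>+\<omega>. ennreal (exp (\<alpha>1 * (W p1 \<omega> - W p0 \<omega>) + \<alpha>2 * (W p2 \<omega> - W p1 \<omega>))) \<partial>M)
       = ennreal (exp ((\<alpha>1\<^sup>2 * (p1 - p0) + \<alpha>2\<^sup>2 * (p2 - p1)) / 2))"
proof -
  consider "p0 = p1" | "p1 = p2" | "p0 < p1" "p1 < p2" using assms by linarith
  then show ?thesis
  proof cases
    case 3
    then have "sorted_wrt (<) [p0, p1, p2]" by simp
    from nn_integral_exp_increments[OF this, of "\<lambda>i. if i = 0 then \<alpha>1 else \<alpha>2"] show ?thesis
      by (simp add: numeral_2_eq_2 exp_add ennreal_mult' add_divide_distrib)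
  qed (use nn_integral_exp_increment assms in simp_all)
qed

lemma nn_integral_exp_three_increments:
  assumes "p0 \<le> p1" "p1 \<le> p2" "p2 \<le> p3"
  shows "(\<integral>\<^sup>+\<omega>. ennreal (exp (\<alpha>1 * (W p1 \<omega> - W p0 \<omega>) + \<alpha>2 * (W p2 \<omega> - W p1 \<omega>) + \<alpha>3 * (W p3 \<omega> - W p2 \<omega>))) \<partial>M)
       = ennreal (exp ((\<alpha>1\<^sup>2 * (p1 - p0) + \<alpha>2\<^sup>2 * (p2 - p1) + \<alpha>3\<^sup>2 * (p3 - p2)) / 2))"
proof -
  consider "p0 = p1" | "p1 = p2" | "p2 = p3" | "p0 < p1" "p1 < p2" "p2 < p3" using assms by linarith
  then show ?thesis
  proof cases
    case 4
    then have "sorted_wrt (<) [p0, p1, p2, p3]" by simp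
    from nn_integral_exp_increments[OF this, of "\<lambda>i. if i = 0 then \<alpha>1 else if i = 1 then \<alpha>2 else \<alpha>3"]
    show ?thesis
      by (simp add: numeral_3_eq_3 exp_add ennreal_mult' add_divide_distrib)
  qed (use nn_integral_exp_two_increments assms in simp_all)
qed

lemma nn_integral_exp_two_intervals_ordered:
  assumes "l1 \<le> r1" "l2 \<le> r2" "l1 \<le> l2"
  shows "(\<integral>\<^sup>+\<omega>. ennreal (exp (c * (W r1 \<omega> - W l1 \<omega>) + c * (W r2 \<omega> - W l2 \<omega>))) \<partial>M)
       = ennreal (exp (c\<^sup>2 / 2 * ((r1 - l1) + (r2 - l2) + 2 * overlap l1 r1 l2 r2)))"
proof -
  consider "r1 \<le> l2" | "l2 < r1" "r1 \<le> r2" | "r2 < r1" by linarith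
  then show ?thesis
  proof cases
    case 1
    have e: "c * (W r1 \<omega> - W l1 \<omega>) + c * (W r2 \<omega> - W l2 \<omega>)
        = c * (W r1 \<omega> - W l1 \<omega>) + 0 * (W l2 \<omega> - W r1 \<omega>) + c * (W r2 \<omega> - W l2 \<omega>)" for \<omega>
      by simp
    have o: "overlap l1 r1 l2 r2 = 0" using 1 assms by (simp add: overlap_def)
    show ?thesis
      unfolding e o by (subst nn_integral_exp_three_increments)
        (use 1 assms in \<open>auto simp: power2_eq_square field_simps\<close>)
  next
    case 2
    have e: "c * (W r1 \<omega> - W l1 \<omega>) + c * (W r2 \<omega> - W l2 \<omega>)
        = c * (W l2 \<omega> - W l1 \<omega>) + (2 * c) * (W r1 \<omega> - W l2 \<omega>) + c * (W r2 \<omega> - W r1 \<omega>)" for \<omega>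
      by (simp add: algebra_simps)
    have o: "overlap l1 r1 l2 r2 = r1 - l2" using 2 assms by (simp add: overlap_def)
    show ?thesis
      unfolding e o by (subst nn_integral_exp_three_increments)
        (use 2 assms in \<open>auto simp: power2_eq_square field_simps\<close>)
  next
    case 3
    have e: "c * (W r1 \<omega> - W l1 \<omega>) + c * (W r2 \<omega> - W l2 \<omega>)
        = c * (W l2 \<omega> - W l1 \<omega>) + (2 * c) * (W r2 \<omega> - W l2 \<omega>) + c * (W r1 \<omega> - W r2 \<omega>)" for \<omega>
      by (simp add: algebra_simps)
    have o: "overlap l1 r1 l2 r2 = r2 - l2" using 3 assms by (simp add: overlap_def)
    show ?thesis
      unfolding e o by (subst nn_integral_exp_three_increments)
        (use 3 assms in \<open>auto simp: power2_eq_square field_simps\<close>)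
  qed
qed

lemma nn_integral_exp_two_intervals:
  assumes "l1 \<le> r1" "l2 \<le> r2"
  shows "(\<integral>\<^sup>+\<omega>. ennreal (exp (c * (W r1 \<omega> - W l1 \<omega>) + c * (W r2 \<omega> - W l2 \<omega>))) \<partial>M)
       = ennreal (exp (c\<^sup>2 / 2 * ((r1 - l1) + (r2 - l2) + 2 * overlap l1 r1 l2 r2)))"
proof (cases "l1 \<le> l2")
  case False
  have "overlap l1 r1 l2 r2 = overlap l2 r2 l1 r1"
    by (simp add: overlap_def min.commute max.commute)
  with nn_integral_exp_two_intervals_ordered[of l2 r2 l1 r1] assms False show ?thesis
    by (simp add: ac_simps)
qed (use nn_integral_exp_two_intervals_ordered assms in blast)

end

section \<open>The exponential functional\<close>

lemma inverse_mult_minus_inverse_square: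
  fixes g c :: real
  assumes "c\<^sup>2 < g"
  shows "1 / ((g - c\<^sup>2 / 2) * (g - c\<^sup>2)) - 1 / (g - c\<^sup>2 / 2)\<^sup>2 = c\<^sup>2 / (2 * (g - c\<^sup>2 / 2)\<^sup>2 * (g - c\<^sup>2))"
proof -
  define a b where "a = g - c\<^sup>2 / 2" and "b = g - c\<^sup>2"
  have "a > 0" "b > 0"
    using assms zero_le_power2[of c] unfolding a_def b_def by linarith+
  then have "1 / (a * b) - 1 / a\<^sup>2 = (a - b) / (2 * a\<^sup>2 * b) * 2"
    by (simp add: field_simps power2_eq_square)
  also have "a - b = c\<^sup>2 / 2"
    by (simp add: a_def b_def)
  finally show ?thesis
    by (simp add: a_def b_def)
qed

locale exponential_functional = two_sided_brownian_motion +
  fixes g c :: real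
  assumes g_pos: "g > 0"
    and sublinear: "\<And>\<omega>. \<omega> \<in> space M \<Longrightarrow> ((\<lambda>t. W t \<omega> / t) \<longlongrightarrow> 0) at_bot"
begin

text \<open>\<open>integrand r \<omega>\<close> is the integrand of \<open>M\<^sub>n (\<theta>\<^sub>r \<omega>)\<close> written through \<open>W\<close> alone, so
  \<open>shifted_Mn r\<close> stands for \<open>M\<^sub>n \<circ> \<theta>\<^sub>r\<close> without mentioning the shift.\<close>

definition integrand :: "real \<Rightarrow> 'a \<Rightarrow> real \<Rightarrow> real" where
  "integrand r \<omega> x = exp (g * x + c * (W (x + r) \<omega> - W r \<omega>))"

definition shifted_Mn :: "real \<Rightarrow> 'a \<Rightarrow> real" where
  "shifted_Mn r \<omega> = (LINT x:{..0}|lborel. integrand r \<omega> x)"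

lemma borel_measurable_integrand [measurable (raw)]:
  assumes [measurable]: "f \<in> borel_measurable N" "h \<in> measurable N M"
  shows "(\<lambda>z. integrand r (h z) (f z)) \<in> borel_measurable N"
  unfolding integrand_def by measurable

lemma pair_sigma_finite_lborel: "pair_sigma_finite lborel M"
  by (intro pair_sigma_finite.intro sigma_finite_lborel prob_space_imp_sigma_finite prob_space_axioms)

lemma nn_integral_integrand_finite:
  assumes \<omega>: "\<omega> \<in> space M"
  shows "(\<integral>\<^sup>+x\<in>{..0}. ennreal (integrand r \<omega> x) \<partial>lborel) < \<infinity>"
proof -
  have "continuous_on UNIV (\<lambda>t. c * W t \<omega>)"
    using continuous_on_W[OF \<omega>] by (intro continuous_intros)
  moreover have "((\<lambda>t. c * W t \<omega> / t) \<longlongrightarrow> 0) at_bot"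
    using tendsto_mult[OF tendsto_const sublinear[OF \<omega>], of c] by simp
  moreover have "g / 2 > 0" using g_pos by simp
  ultimately obtain B where B: "\<And>x. x \<le> r \<Longrightarrow> c * W x \<omega> \<le> B - g / 2 * x"
    by (rule continuous_sublinear_at_bot_bound[where z = r]) blast
  define C where "C = B - g / 2 * r - c * W r \<omega>"
  have "integrand r \<omega> x \<le> exp C * exp (g / 2 * x)" if "x \<le> 0" for x
  proof -
    have "c * W (x + r) \<omega> \<le> B - g / 2 * (x + r)"
      using B that by simp
    then have "g * x + c * (W (x + r) \<omega> - W r \<omega>) \<le> g * x + (B - g / 2 * (x + r)) - c * W r \<omega>"
      by (simp add: right_diff_distrib)
    also have "\<dots> = C + g / 2 * x"
      by (simp add: C_def field_simps)
    finally have "g * x + c * (W (x + r) \<omega> - W r \<omega>) \<le> C + g / 2 * x" .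
    then show ?thesis by (simp add: integrand_def mult_exp_exp)
  qed
  then have "(\<integral>\<^sup>+x\<in>{..0}. ennreal (integrand r \<omega> x) \<partial>lborel)
      \<le> (\<integral>\<^sup>+x. ennreal (exp C) * (ennreal (exp (g / 2 * x)) * indicator {..0} x) \<partial>lborel)"
    by (intro nn_integral_mono) (auto simp: ennreal_mult'[symmetric] split: split_indicator)
  also have "\<dots> = ennreal (exp C) * ennreal (2 / g)"
    using nn_integral_exp_atMost[of "g / 2" 0] g_pos by (simp add: nn_integral_cmult)
  also have "\<dots> < \<infinity>"
    by (simp add: ennreal_mult_less_top)
  finally show ?thesis .
qed

lemma shifted_Mn_nonneg: "shifted_Mn r \<omega> \<ge> 0"
  unfolding shifted_Mn_def set_lebesgue_integral_def
  by (intro integral_nonneg_AE) (simp add: integrand_def)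

lemma ennreal_shifted_Mn:
  assumes \<omega>: "\<omega> \<in> space M"
  shows "ennreal (shifted_Mn r \<omega>) = (\<integral>\<^sup>+x\<in>{..0}. ennreal (integrand r \<omega> x) \<partial>lborel)"
proof -
  have meas: "(\<lambda>x. indicator {..0} x *\<^sub>R integrand r \<omega> x) \<in> borel_measurable lborel"
    using \<omega> by measurable
  have "shifted_Mn r \<omega> = enn2real (\<integral>\<^sup>+x. ennreal (indicator {..0} x *\<^sub>R integrand r \<omega> x) \<partial>lborel)"
    unfolding shifted_Mn_def set_lebesgue_integral_def
    by (rule integral_eq_nn_integral[OF meas]) (simp add: integrand_def)
  also have "(\<integral>\<^sup>+x. ennreal (indicator {..0} x *\<^sub>R integrand r \<omega> x) \<partial>lborel)
      = (\<integral>\<^sup>+x\<in>{..0}. ennreal (integrand r \<omega> x) \<partial>lborel)"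
    by (intro nn_integral_cong) (simp split: split_indicator)
  finally show ?thesis
    using nn_integral_integrand_finite[OF \<omega>] by simp
qed

lemma borel_measurable_shifted_Mn [measurable]: "shifted_Mn r \<in> borel_measurable M"
proof -
  have "(\<lambda>\<omega>. enn2real (\<integral>\<^sup>+x\<in>{..0}. ennreal (integrand r \<omega> x) \<partial>lborel)) \<in> borel_measurable M"
    by measurable
  then show ?thesis
    by (rule measurable_cong[THEN iffD1, rotated])
       (simp add: ennreal_shifted_Mn[symmetric] shifted_Mn_nonneg)
qed

lemma nn_integral_integrand:
  assumes "x \<le> 0"
  shows "(\<integral>\<^sup>+\<omega>. ennreal (integrand r \<omega> x) \<partial>M) = ennreal (exp ((g - c\<^sup>2 / 2) * x))"
proof -
  have "integrand r \<omega> x = exp (g * x) * exp ((- c) * (W r \<omega> - W (x + r) \<omega>))" for \<omega>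
    by (simp add: integrand_def mult_exp_exp algebra_simps)
  then have "(\<integral>\<^sup>+\<omega>. ennreal (integrand r \<omega> x) \<partial>M)
      = ennreal (exp (g * x)) * (\<integral>\<^sup>+\<omega>. ennreal (exp ((- c) * (W r \<omega> - W (x + r) \<omega>))) \<partial>M)"
    by (simp add: ennreal_mult' nn_integral_cmult)
  also have "\<dots> = ennreal (exp (g * x)) * ennreal (exp ((- c)\<^sup>2 * (r - (x + r)) / 2))"
    using assms by (subst nn_integral_exp_increment) simp_all
  also have "\<dots> = ennreal (exp ((g - c\<^sup>2 / 2) * x))"
    by (simp add: ennreal_mult'[symmetric] mult_exp_exp algebra_simps)
  finally show ?thesis .
qed

lemma nn_integral_shifted_Mn:
  "(\<integral>\<^sup>+\<omega>. ennreal (shifted_Mn r \<omega>) \<partial>M) = (\<integral>\<^sup>+x\<in>{..0}. ennreal (exp ((g - c\<^sup>2 / 2) * x)) \<partial>lborel)"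
proof -
  interpret pair_sigma_finite lborel M by (rule pair_sigma_finite_lborel)
  have "(\<integral>\<^sup>+\<omega>. ennreal (shifted_Mn r \<omega>) \<partial>M)
      = (\<integral>\<^sup>+\<omega>. (\<integral>\<^sup>+x. ennreal (integrand r \<omega> x) * indicator {..0} x \<partial>lborel) \<partial>M)"
    by (intro nn_integral_cong) (simp add: ennreal_shifted_Mn)
  also have "\<dots> = (\<integral>\<^sup>+x. (\<integral>\<^sup>+\<omega>. ennreal (integrand r \<omega> x) * indicator {..0} x \<partial>M) \<partial>lborel)"
    by (rule Fubini') measurable
  also have "\<dots> = (\<integral>\<^sup>+x\<in>{..0}. ennreal (exp ((g - c\<^sup>2 / 2) * x)) \<partial>lborel)"
    by (intro nn_integral_cong) (auto simp: nn_integral_integrand split: split_indicator)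
  finally show ?thesis .
qed

lemma nn_integral_integrand_mult:
  assumes "x \<le> 0" "y \<le> 0" "t \<ge> 0"
  shows "(\<integral>\<^sup>+\<omega>. ennreal (integrand (r + t) \<omega> x) * ennreal (integrand r \<omega> y) \<partial>M)
       = ennreal (exp ((g - c\<^sup>2 / 2) * x + (g - c\<^sup>2 / 2) * y + c\<^sup>2 * overlap (x + t) t y 0))"
proof -
  have "ennreal (integrand (r + t) \<omega> x) * ennreal (integrand r \<omega> y)
      = ennreal (exp (g * x + g * y)) *
        ennreal (exp ((- c) * (W (r + t) \<omega> - W (x + (r + t)) \<omega>) + (- c) * (W r \<omega> - W (y + r) \<omega>)))"
    for \<omega> by (simp add: integrand_def ennreal_mult'[symmetric] mult_exp_exp algebra_simps)
  then have "(\<integral>\<^sup>+\<omega>. ennreal (integrand (r + t) \<omega> x) * ennreal (integrand r \<omega> y) \<partial>M)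
      = ennreal (exp (g * x + g * y)) *
        (\<integral>\<^sup>+\<omega>. ennreal (exp ((- c) * (W (r + t) \<omega> - W (x + (r + t)) \<omega>) + (- c) * (W r \<omega> - W (y + r) \<omega>))) \<partial>M)"
    by (simp add: nn_integral_cmult)
  also have "\<dots> = ennreal (exp (g * x + g * y)) *
      ennreal (exp ((- c)\<^sup>2 / 2 * (((r + t) - (x + (r + t))) + (r - (y + r)) + 2 * overlap (x + (r + t)) (r + t) (y + r) r)))"
    using assms by (subst nn_integral_exp_two_intervals) simp_all
  also have "overlap (x + (r + t)) (r + t) (y + r) r = overlap (x + t) t y 0"
    by (simp add: overlap_def min_add_distrib_left max_add_distrib_left flip: add.assoc)
  also have "ennreal (exp (g * x + g * y)) *
      ennreal (exp ((- c)\<^sup>2 / 2 * (((r + t) - (x + (r + t))) + (r - (y + r)) + 2 * overlap (x + t) t y 0)))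
      = ennreal (exp ((g - c\<^sup>2 / 2) * x + (g - c\<^sup>2 / 2) * y + c\<^sup>2 * overlap (x + t) t y 0))"
    by (simp add: ennreal_mult'[symmetric] mult_exp_exp algebra_simps)
  finally show ?thesis .
qed

lemma nn_integral_shifted_Mn_mult_cross_moment:
  assumes t: "t \<ge> 0"
  shows "(\<integral>\<^sup>+\<omega>. ennreal (shifted_Mn (r + t) \<omega> * shifted_Mn r \<omega>) \<partial>M) = cross_moment (g - c\<^sup>2 / 2) c t"
proof -
  interpret pair_sigma_finite lborel M by (rule pair_sigma_finite_lborel)
  define G where "G x y \<omega> = ennreal (integrand (r + t) \<omega> x) * indicator {..0} x * (ennreal (integrand r \<omega> y) * indicator {..0} y)"
    for x y \<omega>
  have "(\<integral>\<^sup>+\<omega>. ennreal (shifted_Mn (r + t) \<omega> * shifted_Mn r \<omega>) \<partial>M)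
      = (\<integral>\<^sup>+\<omega>. (\<integral>\<^sup>+x. (\<integral>\<^sup>+y. G x y \<omega> \<partial>lborel) \<partial>lborel) \<partial>M)"
  proof (intro nn_integral_cong)
    fix \<omega> assume \<omega>: "\<omega> \<in> space M"
    then show "ennreal (shifted_Mn (r + t) \<omega> * shifted_Mn r \<omega>) = (\<integral>\<^sup>+x. (\<integral>\<^sup>+y. G x y \<omega> \<partial>lborel) \<partial>lborel)"
      unfolding G_def
      by (simp add: ennreal_mult shifted_Mn_nonneg ennreal_shifted_Mn nn_integral_cmult nn_integral_multc)
  qed
  also have "\<dots> = (\<integral>\<^sup>+x. (\<integral>\<^sup>+\<omega>. (\<integral>\<^sup>+y. G x y \<omega> \<partial>lborel) \<partial>M) \<partial>lborel)"
    by (rule Fubini') (unfold G_def, measurable)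
  also have "\<dots> = (\<integral>\<^sup>+x. (\<integral>\<^sup>+y. (\<integral>\<^sup>+\<omega>. G x y \<omega> \<partial>M) \<partial>lborel) \<partial>lborel)"
    by (intro nn_integral_cong Fubini') (unfold G_def, measurable)
  also have "\<dots> = cross_moment (g - c\<^sup>2 / 2) c t"
    unfolding cross_moment_def
  proof (intro nn_integral_cong)
    fix x
    have "(\<integral>\<^sup>+\<omega>. G x y \<omega> \<partial>M)
        = ennreal (exp ((g - c\<^sup>2 / 2) * x + (g - c\<^sup>2 / 2) * y + c\<^sup>2 * overlap (x + t) t y 0))
          * indicator {..0} y * indicator {..0} x" for y
      using t by (cases "x \<le> 0 \<and> y \<le> 0")
        (auto simp: G_def nn_integral_integrand_mult split: split_indicator)
    then show "(\<integral>\<^sup>+y. (\<integral>\<^sup>+\<omega>. G x y \<omega> \<partial>M) \<partial>lborel)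
        = (\<integral>\<^sup>+y\<in>{..0}. ennreal (exp ((g - c\<^sup>2 / 2) * x + (g - c\<^sup>2 / 2) * y + c\<^sup>2 * overlap (x + t) t y 0)) \<partial>lborel)
          * indicator {..0} x"
      by (simp add: nn_integral_multc)
  qed
  finally show ?thesis .
qed

lemma integrable_shifted_Mn_iff: "integrable M (shifted_Mn r) \<longleftrightarrow> c\<^sup>2 / 2 < g"
proof -
  have "integrable M (shifted_Mn r) \<longleftrightarrow> (\<integral>\<^sup>+\<omega>. ennreal (shifted_Mn r \<omega>) \<partial>M) < \<infinity>"
    by (simp add: integrable_iff_bounded shifted_Mn_nonneg)
  also have "\<dots> \<longleftrightarrow> c\<^sup>2 / 2 < g"
    by (cases "c\<^sup>2 / 2 < g")
       (simp_all add: nn_integral_shifted_Mn nn_integral_exp_atMost nn_integral_exp_atMost_eq_infinity)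
  finally show ?thesis .
qed

lemma expectation_shifted_Mn:
  assumes "c\<^sup>2 / 2 < g"
  shows "expectation (shifted_Mn r) = 1 / (g - c\<^sup>2 / 2)"
  using assms
  by (simp add: integral_eq_nn_integral shifted_Mn_nonneg nn_integral_shifted_Mn nn_integral_exp_atMost)

lemma nn_integral_shifted_Mn_mult:
  assumes "c\<^sup>2 < g" "t \<ge> 0"
  defines "a \<equiv> g - c\<^sup>2 / 2"
  shows "(\<integral>\<^sup>+\<omega>. ennreal (shifted_Mn (r + t) \<omega> * shifted_Mn r \<omega>) \<partial>M)
       = ennreal (1 / a\<^sup>2 + exp (- a * t) * (1 / (a * (g - c\<^sup>2)) - 1 / a\<^sup>2))"
proof -
  have a: "a > 0" "2 * a - c\<^sup>2 > 0" "2 * a - c\<^sup>2 = 2 * (g - c\<^sup>2)" "g - c\<^sup>2 > 0"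
    using assms(1) g_pos by (auto simp: a_def)
  have "(\<integral>\<^sup>+\<omega>. ennreal (shifted_Mn (r + t) \<omega> * shifted_Mn r \<omega>) \<partial>M) = cross_moment a c t"
    unfolding a_def using assms(2) by (rule nn_integral_shifted_Mn_mult_cross_moment)
  also have "\<dots> = ennreal ((1 - exp (- a * t)) / a\<^sup>2) + ennreal (exp (- a * t)) * cross_moment a c 0"
    using a(1) assms(2) by (rule cross_moment_shift)
  also have "cross_moment a c 0 = ennreal (2 / a) * ennreal (exp ((2 * a - c\<^sup>2) * 0) / (2 * a - c\<^sup>2))"
    by (subst cross_moment_zero[OF a(1)], subst nn_integral_exp_atMost[OF a(2)]) (rule refl)
  also have "\<dots> = ennreal (1 / (a * (g - c\<^sup>2)))"
  proof -
    have "2 / a * (exp ((2 * a - c\<^sup>2) * 0) / (2 * a - c\<^sup>2)) = 1 / (a * (g - c\<^sup>2))"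
      unfolding a(3) using a(1,4) by (simp add: field_simps)
    then show ?thesis
      using a(1,2) by (simp add: ennreal_mult'[symmetric])
  qed
  also have "ennreal ((1 - exp (- a * t)) / a\<^sup>2) + ennreal (exp (- a * t)) * ennreal (1 / (a * (g - c\<^sup>2)))
      = ennreal (1 / a\<^sup>2 + exp (- a * t) * (1 / (a * (g - c\<^sup>2)) - 1 / a\<^sup>2))"
  proof -
    define E where "E = exp (- a * t)"
    define B where "B = 1 / (a * (g - c\<^sup>2))"
    have "E \<le> 1" "E \<ge> 0" "B \<ge> 0"
      using a assms(2) by (simp_all add: E_def B_def)
    moreover have "(1 - E) / a\<^sup>2 + E * B = 1 / a\<^sup>2 + E * (B - 1 / a\<^sup>2)"
      by (simp add: diff_divide_distrib right_diff_distrib)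
    ultimately show ?thesis
      unfolding E_def[symmetric] B_def[symmetric]
      by (simp add: ennreal_mult'[symmetric] ennreal_plus[symmetric])
  qed
  finally show ?thesis .
qed

lemma shifted_Mn_mult:
  assumes "c\<^sup>2 < g"
  defines "a \<equiv> g - c\<^sup>2 / 2"
  shows integrable_shifted_Mn_mult: "integrable M (\<lambda>\<omega>. shifted_Mn u \<omega> * shifted_Mn v \<omega>)"
    and expectation_shifted_Mn_mult: "expectation (\<lambda>\<omega>. shifted_Mn u \<omega> * shifted_Mn v \<omega>)
          = 1 / a\<^sup>2 + exp (- a * \<bar>u - v\<bar>) * (1 / (a * (g - c\<^sup>2)) - 1 / a\<^sup>2)"
proof -
  define m where "m = 1 / a\<^sup>2 + exp (- a * \<bar>u - v\<bar>) * (1 / (a * (g - c\<^sup>2)) - 1 / a\<^sup>2)"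
  have nn: "(\<integral>\<^sup>+\<omega>. ennreal (shifted_Mn u \<omega> * shifted_Mn v \<omega>) \<partial>M) = ennreal m"
  proof (cases "v \<le> u")
    case True
    then show ?thesis
      using nn_integral_shifted_Mn_mult[OF assms(1), of "u - v" v] by (simp add: m_def a_def)
  next
    case False
    then show ?thesis
      using nn_integral_shifted_Mn_mult[OF assms(1), of "v - u" u]
      by (simp add: m_def a_def mult.commute abs_minus_commute)
  qed
  have "m \<ge> 0"
    using inverse_mult_minus_inverse_square[OF assms(1)] assms(1) by (simp add: m_def a_def)
  moreover have "AE \<omega> in M. 0 \<le> shifted_Mn u \<omega> * shifted_Mn v \<omega>"
    by (simp add: shifted_Mn_nonneg)
  ultimately show "integrable M (\<lambda>\<omega>. shifted_Mn u \<omega> * shifted_Mn v \<omega>)"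
    and "expectation (\<lambda>\<omega>. shifted_Mn u \<omega> * shifted_Mn v \<omega>) = m"
    using nn by (simp_all add: integrable_iff_bounded integral_eq_nn_integral shifted_Mn_nonneg)
qed

lemma integrable_shifted_Mn_square_iff: "integrable M (\<lambda>\<omega>. (shifted_Mn r \<omega>)\<^sup>2) \<longleftrightarrow> c\<^sup>2 < g"
proof
  assume "c\<^sup>2 < g"
  then show "integrable M (\<lambda>\<omega>. (shifted_Mn r \<omega>)\<^sup>2)"
    using integrable_shifted_Mn_mult[of r r] by (simp add: power2_eq_square)
next
  assume square: "integrable M (\<lambda>\<omega>. (shifted_Mn r \<omega>)\<^sup>2)"
  then have "integrable M (shifted_Mn r)"
    by (rule square_integrable_imp_integrable[OF borel_measurable_shifted_Mn])
  then have "c\<^sup>2 / 2 < g"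
    by (simp add: integrable_shifted_Mn_iff)
  show "c\<^sup>2 < g"
  proof (rule ccontr)
    assume "\<not> c\<^sup>2 < g"
    define a where "a = g - c\<^sup>2 / 2"
    have "a > 0" using \<open>c\<^sup>2 / 2 < g\<close> by (simp add: a_def)
    have "(\<integral>\<^sup>+\<omega>. ennreal (shifted_Mn (r + 0) \<omega> * shifted_Mn r \<omega>) \<partial>M) = cross_moment a c 0"
      unfolding a_def by (rule nn_integral_shifted_Mn_mult_cross_moment) simp
    also have "\<dots> = ennreal (2 / a) * (\<integral>\<^sup>+x\<in>{..0}. ennreal (exp ((2 * a - c\<^sup>2) * x)) \<partial>lborel)"
      using \<open>a > 0\<close> by (rule cross_moment_zero)
    also have "(\<integral>\<^sup>+x\<in>{..0}. ennreal (exp ((2 * a - c\<^sup>2) * x)) \<partial>lborel) = \<infinity>"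
      using \<open>\<not> c\<^sup>2 < g\<close> by (intro nn_integral_exp_atMost_eq_infinity) (simp add: a_def)
    finally have "(\<integral>\<^sup>+\<omega>. ennreal ((shifted_Mn r \<omega>)\<^sup>2) \<partial>M) = \<infinity>"
      using \<open>a > 0\<close> by (simp add: ennreal_mult_top power2_eq_square)
    with square show False
      by (simp add: integrable_iff_bounded shifted_Mn_nonneg)
  qed
qed

lemma variance_shifted_Mn:
  assumes "c\<^sup>2 < g"
  shows "variance (shifted_Mn r) = c\<^sup>2 / (2 * (g - c\<^sup>2 / 2)\<^sup>2 * (g - c\<^sup>2))"
proof -
  have "c\<^sup>2 / 2 < g" using assms zero_le_power2[of c] by linarith
  then have "variance (shifted_Mn r) = expectation (\<lambda>\<omega>. (shifted_Mn r \<omega>)\<^sup>2) - (expectation (shifted_Mn r))\<^sup>2"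
    using assms by (intro variance_eq) (simp_all add: integrable_shifted_Mn_iff integrable_shifted_Mn_square_iff)
  then show ?thesis
    using \<open>c\<^sup>2 / 2 < g\<close> expectation_shifted_Mn_mult[OF assms, of r r] inverse_mult_minus_inverse_square[OF assms]
    by (simp add: expectation_shifted_Mn power2_eq_square[symmetric] power_divide)
qed

lemma covariance_shifted_Mn:
  assumes "c\<^sup>2 < g"
  shows "Cov M (shifted_Mn u) (shifted_Mn v) = exp (- (g - c\<^sup>2 / 2) * \<bar>u - v\<bar>) * variance (shifted_Mn u)"
proof -
  have "c\<^sup>2 / 2 < g" using assms zero_le_power2[of c] by linarith
  then show ?thesis
    unfolding variance_shifted_Mn[OF assms] Cov_def
    using expectation_shifted_Mn_mult[OF assms, of u v] inverse_mult_minus_inverse_square[OF assms]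
    by (simp add: expectation_shifted_Mn power2_eq_square)
qed

lemma Mn_eq_shifted_Mn: "\<omega> \<in> space M \<Longrightarrow> Mn W g c \<omega> = shifted_Mn 0 \<omega>"
  by (simp add: Mn_def shifted_Mn_def integrand_def W_0)

lemma integrable_Mn_iff: "integrable M (Mn W g c) \<longleftrightarrow> c\<^sup>2 / 2 < g"
  using integrable_shifted_Mn_iff[of 0]
  by (simp add: Mn_eq_shifted_Mn cong: Bochner_Integration.integrable_cong)

lemma integral_Mn: "c\<^sup>2 / 2 < g \<Longrightarrow> (\<integral>\<omega>. Mn W g c \<omega> \<partial>M) = 1 / (g - c\<^sup>2 / 2)"
  using expectation_shifted_Mn[of 0]
  by (simp add: Mn_eq_shifted_Mn cong: Bochner_Integration.integral_cong)

lemma integrable_Mn_square_iff: "integrable M (\<lambda>\<omega>. (Mn W g c \<omega>)\<^sup>2) \<longleftrightarrow> c\<^sup>2 < g"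
  using integrable_shifted_Mn_square_iff[of 0]
  by (simp add: Mn_eq_shifted_Mn cong: Bochner_Integration.integrable_cong)

lemma Var_Mn: "c\<^sup>2 < g \<Longrightarrow> Var M (Mn W g c) = c\<^sup>2 / (2 * (g - c\<^sup>2 / 2)\<^sup>2 * (g - c\<^sup>2))"
  using variance_shifted_Mn[of 0]
  by (simp add: Var_def Mn_eq_shifted_Mn cong: Bochner_Integration.integral_cong)

end

locale exponential_functional_flow = exponential_functional +
  fixes \<theta> :: "real \<Rightarrow> 'a \<Rightarrow> 'a"
  assumes W_shift: "\<And>t s \<omega>. \<omega> \<in> space M \<Longrightarrow> W s (\<theta> t \<omega>) = W (s + t) \<omega> - W t \<omega>"
begin

lemma Mn_shift: "\<omega> \<in> space M \<Longrightarrow> Mn W g c (\<theta> r \<omega>) = shifted_Mn r \<omega>"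
  by (simp add: Mn_def shifted_Mn_def integrand_def W_shift)

lemma integrable_Mn_shift_mult_iff:
  "(\<forall>s t. integrable M (\<lambda>\<omega>. Mn W g c (\<theta> (s + t) \<omega>) * Mn W g c (\<theta> s \<omega>))) \<longleftrightarrow> c\<^sup>2 < g"
proof
  assume "\<forall>s t. integrable M (\<lambda>\<omega>. Mn W g c (\<theta> (s + t) \<omega>) * Mn W g c (\<theta> s \<omega>))"
  then have "integrable M (\<lambda>\<omega>. Mn W g c (\<theta> (0 + 0) \<omega>) * Mn W g c (\<theta> 0 \<omega>))" by blast
  then show "c\<^sup>2 < g"
    using integrable_shifted_Mn_square_iff[of 0]
    by (simp add: Mn_shift power2_eq_square cong: Bochner_Integration.integrable_cong)
qed (simp add: Mn_shift integrable_shifted_Mn_mult cong: Bochner_Integration.integrable_cong)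

lemma autocorrelation_Mn:
  assumes "c\<^sup>2 < g" "c \<noteq> 0"
  shows "Cov M (\<lambda>\<omega>. Mn W g c (\<theta> (s + t) \<omega>)) (\<lambda>\<omega>. Mn W g c (\<theta> s \<omega>)) / Var M (Mn W g c)
       = exp (- (g - c\<^sup>2 / 2) * \<bar>t\<bar>)"
proof -
  have "g - c\<^sup>2 > 0" "g - c\<^sup>2 / 2 > 0"
    using assms(1) zero_le_power2[of c] by linarith+
  then show ?thesis
    using covariance_shifted_Mn[OF assms(1), of "s + t" s] variance_shifted_Mn[OF assms(1), of "s + t"]
      Var_Mn[OF assms(1)] assms(2)
    by (simp add: Cov_def Mn_shift cong: Bochner_Integration.integral_cong)
qed

end

lemma less_sqrt_divide_iff:
  fixes x y K :: real
  assumes "K > 0" "y \<ge> 0"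
  shows "y < sqrt x / K \<longleftrightarrow> (y * K)\<^sup>2 < x"
proof -
  have "y < sqrt x / K \<longleftrightarrow> sqrt ((y * K)\<^sup>2) < sqrt x"
    using assms by (simp add: pos_less_divide_eq)
  then show ?thesis
    by (simp only: real_sqrt_less_iff)
qed

theorem lemma9p4:
  fixes M :: "'a measure" and W :: "real \<Rightarrow> 'a \<Rightarrow> real" and \<theta> :: "real \<Rightarrow> 'a \<Rightarrow> 'a"
    and k :: nat and \<sigma> \<beta>s \<beta>n g :: real
  assumes BM: "two_sided_BM M W"
    and growth: "\<forall>\<omega>\<in>space M. ((\<lambda>t. W t \<omega> / t) \<longlongrightarrow> 0) at_top \<and> ((\<lambda>t. W t \<omega> / t) \<longlongrightarrow> 0) at_bot"
    and shift_meas: "\<forall>t. \<theta> t \<in> M \<rightarrow>\<^sub>M M"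
    and shift: "\<forall>t s. \<forall>\<omega>\<in>space M. W s (\<theta> t \<omega>) = W (s + t) \<omega> - W t \<omega>"
    and k: "k \<ge> 2" and sigma_pos: "\<sigma> > 0"
    and g_def: "g = real k * \<beta>s - \<beta>n" and g_pos: "g > 0"
  shows
   "(integrable M (Mn W g (\<sigma> * (real k - 1))) \<longleftrightarrow> \<sigma> < sqrt (2 * g) / (real k - 1)) \<and>
    (\<sigma> < sqrt (2 * g) / (real k - 1) \<longrightarrow>
       (\<integral>\<omega>. Mn W g (\<sigma> * (real k - 1)) \<omega> \<partial>M) = 1 / (g - (real k - 1)\<^sup>2 * \<sigma>\<^sup>2 / 2)) \<and>
    (integrable M (\<lambda>\<omega>. (Mn W g (\<sigma> * (real k - 1)) \<omega>)\<^sup>2) \<longleftrightarrow> \<sigma> < sqrt g / (real k - 1)) \<and>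
    (\<sigma> < sqrt g / (real k - 1) \<longrightarrow>
       Var M (Mn W g (\<sigma> * (real k - 1))) =
         (real k - 1)\<^sup>2 * \<sigma>\<^sup>2 /
           (2 * (g - (real k - 1)\<^sup>2 * \<sigma>\<^sup>2 / 2)\<^sup>2 * (g - (real k - 1)\<^sup>2 * \<sigma>\<^sup>2))) \<and>
    ((\<forall>s t. integrable M (\<lambda>\<omega>. Mn W g (\<sigma> * (real k - 1)) (\<theta> (s + t) \<omega>) *
                               Mn W g (\<sigma> * (real k - 1)) (\<theta> s \<omega>)))
       \<longleftrightarrow> \<sigma> < sqrt g / (real k - 1)) \<and>
    (\<sigma> < sqrt g / (real k - 1) \<longrightarrow>
       (\<forall>s t. Cov M (\<lambda>\<omega>. Mn W g (\<sigma> * (real k - 1)) (\<theta> (s + t) \<omega>))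
                    (\<lambda>\<omega>. Mn W g (\<sigma> * (real k - 1)) (\<theta> s \<omega>))
               / Var M (Mn W g (\<sigma> * (real k - 1)))
             = exp (- (g - (real k - 1)\<^sup>2 * \<sigma>\<^sup>2 / 2) * \<bar>t\<bar>)))"
proof -
  define c where "c = \<sigma> * (real k - 1)"
  have "real k - 1 > 0" using k by simp
  then have "c > 0" using sigma_pos by (simp add: c_def)
  have mean_cond: "\<sigma> < sqrt (2 * g) / (real k - 1) \<longleftrightarrow> c\<^sup>2 / 2 < g"
    and var_cond: "\<sigma> < sqrt g / (real k - 1) \<longleftrightarrow> c\<^sup>2 < g"
    using \<open>real k - 1 > 0\<close> sigma_pos by (auto simp: less_sqrt_divide_iff c_def)
  have c_sq: "(real k - 1)\<^sup>2 * \<sigma>\<^sup>2 = c\<^sup>2"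
    by (simp add: c_def power_mult_distrib)
  interpret exponential_functional_flow M W g c \<theta>
    using BM g_pos growth shift by unfold_locales auto
  show ?thesis
    unfolding c_def[symmetric] c_sq mean_cond var_cond
    using \<open>c > 0\<close> integrable_Mn_iff integral_Mn integrable_Mn_square_iff Var_Mn
      integrable_Mn_shift_mult_iff autocorrelation_Mn
    by simp
qed

end
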